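(* Let $\mathcal{D}$ be a distribution on $\mathcal{X}$, $X\sim\mathcal{D}^n$, and $\sigma>0$. Let $\mathcal{Q}_\sigma$ be the class of functions $\phi:\mathcal{X}^n\to\mathbb{R}$ such that $\phi(X)-\phi(\mathcal{D}^n)$ is $\sigma$-subgaussian, where $\phi(\mathcal{D}^n)=\mathbb{E}_{X'\sim\mathcal{D}^n}[\phi(X')]$. If $\mathcal{M}:\mathcal{X}^n\to\mathcal{Q}_\sigma$ is a randomized mapping with $I(\mathcal{M}(X);X)\le B$, then $$\mathbb{E}_{X\sim\mathcal{D}^n,\ \phi\leftarrow\mathcal{M}(X)}\left[(\phi(X)-\phi(\mathcal{D}^n))^2\right]\le\sigma^2\cdot\inf_{\lambda\in(0,1)}\left(\frac{2B-\ln(1-\lambda)}{\lambda}\right).$$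
   Context: A real random variable $Y$ is $\sigma$-subgaussian if $\mathbb{E}[e^{tY}]\le e^{t^2\sigma^2/2}$ for all $t\in\mathbb{R}$. $I(\cdot;\cdot)$ denotes mutual information measured in nats. *)

theory Defs
  imports "HOL-Probability.Probability"
begin

definition subgaussian :: "'b measure \<Rightarrow> real \<Rightarrow> ('b \<Rightarrow> real) \<Rightarrow> bool" where
  "subgaussian P \<sigma> Y \<longleftrightarrow> Y \<in> borel_measurable P \<and>
     (\<forall>t::real. (\<integral>\<^sup>+ x. ennreal (exp (t * Y x)) \<partial>P) \<le> ennreal (exp (t\<^sup>2 * \<sigma>\<^sup>2 / 2)))"

definition query_class :: "'b measure \<Rightarrow> real \<Rightarrow> ('b \<Rightarrow> real) set" where
  "query_class Xn \<sigma> = {\<phi>. integrable Xn \<phi> \<and>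
       subgaussian Xn \<sigma> (\<lambda>x. \<phi> x - (\<integral>x'. \<phi> x' \<partial>Xn))}"

definition joint_law :: "'b measure \<Rightarrow> 'c measure \<Rightarrow> ('b \<Rightarrow> 'c measure) \<Rightarrow> ('b \<times> 'c) measure" where
  "joint_law Xn T M = Xn \<bind> (\<lambda>x. distr (M x) (Xn \<Otimes>\<^sub>M T) (\<lambda>\<phi>. (x, \<phi>)))"

text \<open>"I(fst;snd) <= B" (in nats) for a joint law J on S x T: the mutual information is
  finite (joint law absolutely continuous w.r.t. product of marginals, log density
  integrable) and the library's mutual information with base e is at most B.\<close>
definition mutual_info_le :: "('b \<times> 'c) measure \<Rightarrow> 'b measure \<Rightarrow> 'c measure \<Rightarrow> real \<Rightarrow> bool" where
  "mutual_info_le J S T B \<longleftrightarrow>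
     (let Q = distr J S fst \<Otimes>\<^sub>M distr J T snd in
        absolutely_continuous Q J \<and> integrable J (entropy_density (exp 1) Q J) \<and>
        prob_space.mutual_information J (exp 1) S T fst snd \<le> B)"

end

theory Submission
  imports Defs
begin

text \<open>Write \<open>Y = \<phi>(X) - \<phi>(D\<^sup>n)\<close>. Averaging the subgaussian bound on
  \<open>E exp(t Y)\<close> over a Gaussian \<open>t\<close> of variance \<open>\<lambda>/\<sigma>\<^sup>2\<close> gives
  \<open>E exp(\<lambda> Y\<^sup>2 / (2 \<sigma>\<^sup>2)) \<le> 1 / sqrt(1 - \<lambda>)\<close> whenever \<open>X\<close> and \<open>\<phi>\<close> are independent,
  i.e. under the product of the marginals. The Donsker-Varadhan change of measure to the
  joint law costs the mutual information, so \<open>E[\<lambda> Y\<^sup>2 / (2 \<sigma>\<^sup>2)] \<le> B - ln(1 - \<lambda>)/2\<close>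
  under the joint law; rearranging and optimising over \<open>\<lambda>\<close> gives the bound.\<close>

lemma nn_integral_normal_density:
  assumes "0 < s"
  shows "(\<integral>\<^sup>+x. ennreal (normal_density m s x) \<partial>lborel) = 1"
  using assms by (subst nn_integral_eq_integral) auto

lemma nn_integral_std_normal_mgf:
  "(\<integral>\<^sup>+g. ennreal (std_normal_density g * exp (a * g)) \<partial>lborel) = ennreal (exp (a\<^sup>2 / 2))"
proof -
  have "std_normal_density g * exp (a * g) = exp (a\<^sup>2 / 2) * normal_density a 1 g" for g
  proof -
    have "exp (- g\<^sup>2 / 2) * exp (a * g) = exp (a\<^sup>2 / 2) * exp (- (g - a)\<^sup>2 / 2)"
      by (simp add: exp_add[symmetric] power2_eq_square algebra_simps add_divide_distrib
          diff_divide_distrib)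
    then show ?thesis unfolding std_normal_density_def normal_density_def by simp
  qed
  then have "(\<integral>\<^sup>+g. ennreal (std_normal_density g * exp (a * g)) \<partial>lborel)
      = (\<integral>\<^sup>+g. ennreal (exp (a\<^sup>2 / 2)) * ennreal (normal_density a 1 g) \<partial>lborel)"
    by (simp add: ennreal_mult)
  also have "\<dots> = ennreal (exp (a\<^sup>2 / 2)) * (\<integral>\<^sup>+g. ennreal (normal_density a 1 g) \<partial>lborel)"
    by (rule nn_integral_cmult) simp
  finally show ?thesis using nn_integral_normal_density[of 1 a] by simp
qed

lemma nn_integral_std_normal_exp_square:
  assumes "0 \<le> l" "l < 1"
  shows "(\<integral>\<^sup>+g. ennreal (std_normal_density g * exp (l * g\<^sup>2 / 2)) \<partial>lborel)
    = ennreal (1 / sqrt (1 - l))"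
proof -
  define s where "s = 1 / sqrt (1 - l)"
  have s: "0 < s" using assms by (simp add: s_def)
  have s2: "s\<^sup>2 = 1 / (1 - l)" using assms by (simp add: s_def power_divide)
  have "std_normal_density g * exp (l * g\<^sup>2 / 2) = s * normal_density 0 s g" for g
  proof -
    have "exp (- g\<^sup>2 / 2) * exp (l * g\<^sup>2 / 2) = exp (- g\<^sup>2 / (2 * s\<^sup>2))"
      using assms unfolding s2 by (simp add: exp_add[symmetric] field_simps)
    moreover have "sqrt (2 * pi * s\<^sup>2) = sqrt (2 * pi) * s" using s by (simp add: real_sqrt_mult)
    ultimately show ?thesis unfolding std_normal_density_def normal_density_def
      using s by (simp add: field_simps)
  qed
  then have "(\<integral>\<^sup>+g. ennreal (std_normal_density g * exp (l * g\<^sup>2 / 2)) \<partial>lborel)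
      = (\<integral>\<^sup>+g. ennreal s * ennreal (normal_density 0 s g) \<partial>lborel)"
    using s by (simp add: ennreal_mult)
  also have "\<dots> = ennreal s * (\<integral>\<^sup>+g. ennreal (normal_density 0 s g) \<partial>lborel)"
    by (rule nn_integral_cmult) simp
  finally show ?thesis using nn_integral_normal_density[OF s, of 0] by (simp add: s_def)
qed

lemma subgaussian_nn_integral_exp_square:
  assumes "prob_space P" and "subgaussian P \<sigma> Y" and "0 < \<sigma>" "0 \<le> l" "l < 1"
  shows "(\<integral>\<^sup>+x. ennreal (exp (l * (Y x)\<^sup>2 / (2 * \<sigma>\<^sup>2))) \<partial>P) \<le> ennreal (1 / sqrt (1 - l))"
proof -
  interpret P: prob_space P by fact
  interpret pair_sigma_finite P lborel by unfold_locales
  have [measurable]: "Y \<in> borel_measurable P"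
    and mgf: "\<And>t. (\<integral>\<^sup>+ x. ennreal (exp (t * Y x)) \<partial>P) \<le> ennreal (exp (t\<^sup>2 * \<sigma>\<^sup>2 / 2))"
    using assms(2) unfolding subgaussian_def by auto
  define k where "k = sqrt l / \<sigma>"
  have k2: "k\<^sup>2 = l / \<sigma>\<^sup>2" using assms by (simp add: k_def power_divide)
  have "(\<integral>\<^sup>+x. ennreal (exp (l * (Y x)\<^sup>2 / (2 * \<sigma>\<^sup>2))) \<partial>P)
      = (\<integral>\<^sup>+x. (\<integral>\<^sup>+g. ennreal (std_normal_density g * exp ((k * Y x) * g)) \<partial>lborel) \<partial>P)"
    using assms by (intro nn_integral_cong)
      (simp add: nn_integral_std_normal_mgf power_mult_distrib k2)
  also have "\<dots> = (\<integral>\<^sup>+g. (\<integral>\<^sup>+x. ennreal (std_normal_density g * exp ((k * Y x) * g)) \<partial>P) \<partial>lborel)"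
    by (rule Fubini'[symmetric]) measurable
  also have "\<dots> = (\<integral>\<^sup>+g. ennreal (std_normal_density g)
      * (\<integral>\<^sup>+x. ennreal (exp ((k * g) * Y x)) \<partial>P) \<partial>lborel)"
    by (intro nn_integral_cong, subst nn_integral_cmult[symmetric])
      (auto simp: ennreal_mult mult_ac)
  also have "\<dots> \<le> (\<integral>\<^sup>+g. ennreal (std_normal_density g)
      * ennreal (exp ((k * g)\<^sup>2 * \<sigma>\<^sup>2 / 2)) \<partial>lborel)"
    by (intro nn_integral_mono mult_left_mono mgf) auto
  also have "\<dots> = (\<integral>\<^sup>+g. ennreal (std_normal_density g * exp (l * g\<^sup>2 / 2)) \<partial>lborel)"
    using assms by (intro nn_integral_cong) (simp add: ennreal_mult power_mult_distrib k2)
  also have "\<dots> = ennreal (1 / sqrt (1 - l))"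
    using assms by (simp add: nn_integral_std_normal_exp_square)
  finally show ?thesis .
qed

text \<open>Donsker-Varadhan, via the pointwise bound \<open>f \<le> ln r + (c - 1) + exp (f - c - ln r)\<close>
  for \<open>r = dJ/dQ\<close>: the last term integrates under \<open>J\<close> to at most
  \<open>exp (-c) * \<integral> exp f dQ \<le> 1\<close>.\<close>
lemma KL_divergence_variational_bound:
  fixes f :: "'a \<Rightarrow> real"
  assumes "prob_space Q" "prob_space J" and sets_J: "sets J = sets Q"
    and ac: "absolutely_continuous Q J"
    and int: "integrable J (entropy_density (exp 1) Q J)"
    and [measurable]: "f \<in> borel_measurable Q" and f_nonneg: "\<And>z. 0 \<le> f z"
    and mgf: "(\<integral>\<^sup>+z. ennreal (exp (f z)) \<partial>Q) \<le> ennreal (exp c)"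
  shows "integrable J f" and "(\<integral>z. f z \<partial>J) \<le> KL_divergence (exp 1) Q J + c"
proof -
  interpret Q: prob_space Q by fact
  interpret J: prob_space J by fact
  define p where "p = RN_deriv Q J"
  define lg where "lg = entropy_density (exp 1) Q J"
  define h where "h z = exp (f z - c - lg z)" for z
  define g where "g z = lg z + (c - 1) + h z" for z
  have [measurable_cong]: "sets J = sets Q" by (rule sets_J)
  have [measurable]: "p \<in> borel_measurable Q" "lg \<in> borel_measurable Q"
    "h \<in> borel_measurable Q" "g \<in> borel_measurable Q"
    unfolding p_def lg_def h_def g_def by measurable
  have lg_eq: "lg z = ln (enn2real (p z))" for z
    by (simp add: lg_def p_def entropy_density_def log_ln[symmetric])
  have h_nonneg: "0 \<le> h z" for z
    by (simp add: h_def)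
  have f_le_g: "f z \<le> g z" for z
    using exp_ge_add_one_self[of "f z - c - lg z"] unfolding g_def h_def by linarith
  have "AE z in Q. p z \<noteq> \<infinity>"
    unfolding p_def by (rule Q.RN_deriv_finite[OF J.sigma_finite_measure_axioms ac sets_J])
  then have "AE z in Q. p z * ennreal (h z) \<le> ennreal (exp (- c)) * ennreal (exp (f z))"
  proof eventually_elim
    case (elim z)
    then obtain r where r: "p z = ennreal r" "0 \<le> r" by (cases "p z") auto
    show ?case
    proof (cases "r = 0")
      case False
      then have "r * h z = exp (- c) * exp (f z)"
        using r by (simp add: h_def lg_eq exp_diff exp_minus divide_inverse)
      then show ?thesis using r by (simp flip: ennreal_mult')
    qed (use r in simp)
  qed
  then have "(\<integral>\<^sup>+z. ennreal (h z) \<partial>J) \<le> ennreal (exp (- c)) * (\<integral>\<^sup>+z. ennreal (exp (f z)) \<partial>Q)"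
    by (simp add: p_def Q.RN_deriv_nn_integral[OF ac sets_J] nn_integral_mono_AE
        flip: nn_integral_cmult)
  also have "\<dots> \<le> 1"
    using mult_left_mono[OF mgf, of "ennreal (exp (- c))"]
    by (simp add: ennreal_mult[symmetric] exp_minus)
  finally have h_le_1: "(\<integral>\<^sup>+z. ennreal (h z) \<partial>J) \<le> 1" .
  have h_int: "integrable J h"
    using h_le_1 by (intro integrableI_nonneg) (auto simp: h_nonneg top_unique less_top[symmetric])
  have g_int: "integrable J g"
    unfolding g_def[abs_def] using int h_int by (simp add: lg_def)
  show f_int: "integrable J f"
    by (rule Bochner_Integration.integrable_bound[OF g_int])
      (auto intro: order_trans[OF f_le_g abs_ge_self] simp: f_nonneg)
  have "(\<integral>z. h z \<partial>J) \<le> 1"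
    using h_le_1 nn_integral_eq_integral[OF h_int] h_nonneg by simp
  then have "(\<integral>z. g z \<partial>J) \<le> KL_divergence (exp 1) Q J + c"
    unfolding g_def[abs_def] using int h_int
    by (simp add: lg_def KL_divergence_def J.prob_space)
  moreover have "(\<integral>z. f z \<partial>J) \<le> (\<integral>z. g z \<partial>J)"
    by (rule integral_mono[OF f_int g_int f_le_g])
  ultimately show "(\<integral>z. f z \<partial>J) \<le> KL_divergence (exp 1) Q J + c" by simp
qed

lemma integral_square_le_KL_divergence:
  fixes Y :: "'b \<times> 'c \<Rightarrow> real"
  assumes P: "prob_space P" and R: "prob_space R" and J: "prob_space J"
    and sets_J: "sets J = sets (P \<Otimes>\<^sub>M R)"
    and ac: "absolutely_continuous (P \<Otimes>\<^sub>M R) J"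
    and int: "integrable J (entropy_density (exp 1) (P \<Otimes>\<^sub>M R) J)"
    and [measurable]: "Y \<in> borel_measurable (P \<Otimes>\<^sub>M R)"
    and subg: "\<And>\<phi>. \<phi> \<in> space R \<Longrightarrow> subgaussian P \<sigma> (\<lambda>x. Y (x, \<phi>))"
    and \<sigma>: "0 < \<sigma>" and l: "0 < l" "l < 1"
  shows "integrable J (\<lambda>z. (Y z)\<^sup>2)"
    and "(\<integral>z. (Y z)\<^sup>2 \<partial>J) \<le> \<sigma>\<^sup>2 * ((2 * KL_divergence (exp 1) (P \<Otimes>\<^sub>M R) J - ln (1 - l)) / l)"
proof -
  interpret R: prob_space R by fact
  interpret pair_prob_space P R using P R by (simp add: pair_prob_space_def pair_sigma_finite_def
      prob_space_imp_sigma_finite)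
  define f where "f z = l * (Y z)\<^sup>2 / (2 * \<sigma>\<^sup>2)" for z
  define c where "c = - ln (1 - l) / 2"
  have f_meas: "f \<in> borel_measurable (P \<Otimes>\<^sub>M R)"
    unfolding f_def by measurable
  have f_nonneg: "0 \<le> f z" for z
    using l by (simp add: f_def)
  have "c = ln (1 / sqrt (1 - l))"
    using l by (simp add: c_def ln_div ln_sqrt)
  then have sqrt_eq: "1 / sqrt (1 - l) = exp c"
    using l by simp
  have "(\<integral>\<^sup>+z. ennreal (exp (f z)) \<partial>(P \<Otimes>\<^sub>M R)) = (\<integral>\<^sup>+\<phi>. (\<integral>\<^sup>+x. ennreal (exp (f (x, \<phi>))) \<partial>P) \<partial>R)"
    using f_meas by (intro nn_integral_snd[symmetric]) measurable
  also have "\<dots> \<le> (\<integral>\<^sup>+\<phi>. ennreal (1 / sqrt (1 - l)) \<partial>R)"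
    using subgaussian_nn_integral_exp_square[OF P subg \<sigma>] l
    by (intro nn_integral_mono) (simp add: f_def)
  also have "\<dots> = ennreal (exp c)"
    by (simp add: sqrt_eq R.emeasure_space_1)
  finally have mgf: "(\<integral>\<^sup>+z. ennreal (exp (f z)) \<partial>(P \<Otimes>\<^sub>M R)) \<le> ennreal (exp c)" .
  note DV = KL_divergence_variational_bound[OF prob_space_pair[OF P R] J sets_J ac int
      f_meas f_nonneg mgf]
  have Y_sq: "(\<lambda>z. (Y z)\<^sup>2) = (\<lambda>z. (2 * \<sigma>\<^sup>2 / l) * f z)"
    using l \<sigma> by (simp add: f_def fun_eq_iff)
  show "integrable J (\<lambda>z. (Y z)\<^sup>2)"
    unfolding Y_sq using DV(1) by simp
  have "(\<integral>z. (Y z)\<^sup>2 \<partial>J) = (2 * \<sigma>\<^sup>2 / l) * (\<integral>z. f z \<partial>J)"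
    unfolding Y_sq by simp
  also have "\<dots> \<le> (2 * \<sigma>\<^sup>2 / l) * (KL_divergence (exp 1) (P \<Otimes>\<^sub>M R) J + c)"
    using DV(2) l by (intro mult_left_mono) auto
  also have "\<dots> = \<sigma>\<^sup>2 * ((2 * KL_divergence (exp 1) (P \<Otimes>\<^sub>M R) J - ln (1 - l)) / l)"
    using l by (simp add: c_def field_simps)
  finally show "(\<integral>z. (Y z)\<^sup>2 \<partial>J)
      \<le> \<sigma>\<^sup>2 * ((2 * KL_divergence (exp 1) (P \<Otimes>\<^sub>M R) J - ln (1 - l)) / l)" .
qed

context
  fixes P :: "'b measure" and T :: "'c measure" and M :: "'b \<Rightarrow> 'c measure"
  assumes P: "prob_space P" and M[measurable]: "M \<in> P \<rightarrow>\<^sub>M prob_algebra T"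
begin

lemma joint_law_eq_bind:
  "joint_law P T M = P \<bind> (\<lambda>x. distr (M x) (P \<Otimes>\<^sub>M T) (\<lambda>\<phi>. (x, \<phi>)))"
  and measurable_joint_law_kernel:
  "(\<lambda>x. distr (M x) (P \<Otimes>\<^sub>M T) (\<lambda>\<phi>. (x, \<phi>))) \<in> P \<rightarrow>\<^sub>M prob_algebra (P \<Otimes>\<^sub>M T)"
  unfolding joint_law_def by (auto intro: measurable_distr_prob_space2[OF M])

lemma prob_space_joint_law: "prob_space (joint_law P T M)"
  unfolding joint_law_eq_bind
  by (rule prob_space_bind'[OF _ measurable_joint_law_kernel]) (simp add: space_prob_algebra P)

lemma sets_joint_law: "sets (joint_law P T M) = sets (P \<Otimes>\<^sub>M T)"
  unfolding joint_law_eq_bind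
  by (rule sets_bind'[OF _ measurable_joint_law_kernel]) (simp add: space_prob_algebra P)

lemma distr_joint_law_fst: "distr (joint_law P T M) P fst = P"
proof -
  interpret P: prob_space P by (rule P)
  have "distr (joint_law P T M) P fst = P \<bind> (\<lambda>x. distr (distr (M x) (P \<Otimes>\<^sub>M T) (\<lambda>\<phi>. (x, \<phi>))) P fst)"
    unfolding joint_law_eq_bind
    by (rule distr_bind[OF measurable_prob_algebraD[OF measurable_joint_law_kernel] P.not_empty])
      simp
  also have "\<dots> = P \<bind> return P"
  proof (rule bind_cong[OF refl])
    fix x assume x: "x \<in> space P"
    then have "prob_space (M x)" and sets_M: "sets (M x) = sets T"
      using measurable_space[OF M] by (simp_all add: space_prob_algebra)
    have "(\<lambda>\<phi>. (x, \<phi>)) \<in> M x \<rightarrow>\<^sub>M P \<Otimes>\<^sub>M T"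
      unfolding measurable_cong_sets[OF sets_M refl] using x by simp
    then have "distr (distr (M x) (P \<Otimes>\<^sub>M T) (\<lambda>\<phi>. (x, \<phi>))) P fst = distr (M x) P (\<lambda>_. x)"
      by (simp add: distr_distr comp_def)
    also have "\<dots> = return P x"
      using x by (simp add: prob_space.distr_const[OF \<open>prob_space (M x)\<close>])
    finally show "distr (distr (M x) (P \<Otimes>\<^sub>M T) (\<lambda>\<phi>. (x, \<phi>))) P fst = return P x" .
  qed
  also have "\<dots> = P"
    by (rule bind_return'') simp
  finally show ?thesis .
qed

end

lemma mutual_information_fst_snd:
  assumes "prob_space J" and "sets J = sets (S \<Otimes>\<^sub>M T)"
  shows "prob_space.mutual_information J b S T fst snd
    = KL_divergence b (distr J S fst \<Otimes>\<^sub>M distr J T snd) J"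
proof -
  have "distr J (S \<Otimes>\<^sub>M T) (\<lambda>z. (fst z, snd z)) = J"
    using distr_id2[OF assms(2)[symmetric]] by simp
  then show ?thesis
    by (simp add: prob_space.mutual_information_def[OF assms(1)])
qed

lemma mutual_info_leD:
  assumes "prob_space J" and "sets J = sets (S \<Otimes>\<^sub>M T)" and "mutual_info_le J S T B"
  defines "Q \<equiv> distr J S fst \<Otimes>\<^sub>M distr J T snd"
  shows "absolutely_continuous Q J" and "integrable J (entropy_density (exp 1) Q J)"
    and "KL_divergence (exp 1) Q J \<le> B"
  using assms(3)
  by (simp_all add: mutual_info_le_def Q_def Let_def mutual_information_fst_snd[OF assms(1,2)])

lemma measurable_centered_evaluation:
  fixes P :: "'a measure" and T :: "('a \<Rightarrow> real) measure"
  assumes "sigma_finite_measure P" and "(\<lambda>(x, \<phi>). \<phi> x) \<in> borel_measurable (P \<Otimes>\<^sub>M T)"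
  shows "(\<lambda>(x, \<phi>). \<phi> x - (\<integral>x'. \<phi> x' \<partial>P)) \<in> borel_measurable (P \<Otimes>\<^sub>M T)"
proof -
  interpret P: sigma_finite_measure P by fact
  have "(\<lambda>(\<phi>, x). \<phi> x) \<in> borel_measurable (T \<Otimes>\<^sub>M P)"
    using assms(2) by (subst measurable_pair_swap_iff) simp
  then have [measurable]: "(\<lambda>\<phi>. \<integral>x'. \<phi> x' \<partial>P) \<in> borel_measurable T"
    using P.borel_measurable_lebesgue_integral[of "\<lambda>\<phi> x. \<phi> x" T] by simp
  have [measurable]: "(\<lambda>z. snd z (fst z)) \<in> borel_measurable (P \<Otimes>\<^sub>M T)"
    using assms(2) by (simp add: case_prod_beta)
  show ?thesis
    unfolding case_prod_beta by measurable
qed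

lemma le_mult_INF:
  fixes a x :: real and g :: "'a \<Rightarrow> real"
  assumes "0 < a" and "A \<noteq> {}" and "\<And>l. l \<in> A \<Longrightarrow> x \<le> a * g l"
  shows "x \<le> a * (INF l\<in>A. g l)"
proof -
  have "x / a \<le> (INF l\<in>A. g l)"
    using assms by (intro cINF_greatest) (auto simp: field_simps)
  then show ?thesis
    using assms(1) by (simp add: field_simps)
qed

theorem mainTheorem4:
  fixes D :: "'a measure" and n :: nat and \<sigma> B :: real
    and T :: "((nat \<Rightarrow> 'a) \<Rightarrow> real) measure"
    and M :: "(nat \<Rightarrow> 'a) \<Rightarrow> ((nat \<Rightarrow> 'a) \<Rightarrow> real) measure"
  defines "Xn \<equiv> PiM {..<n} (\<lambda>_. D)"
  assumes "prob_space D"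
    and "\<sigma> > 0"
    and "(\<lambda>(x, \<phi>). \<phi> x) \<in> borel_measurable (Xn \<Otimes>\<^sub>M T)"
    and "space T \<subseteq> query_class Xn \<sigma>"
    and "M \<in> measurable Xn (prob_algebra T)"
    and "mutual_info_le (joint_law Xn T M) Xn T B"
  shows "(\<integral>\<^sup>+ (x, \<phi>). ennreal ((\<phi> x - (\<integral>x'. \<phi> x' \<partial>Xn))\<^sup>2) \<partial>(joint_law Xn T M))
           \<le> ennreal (\<sigma>\<^sup>2 * (INF l\<in>{0<..<1::real}. (2 * B - ln (1 - l)) / l))"
proof -
  have Xn: "prob_space Xn"
    unfolding Xn_def by (rule prob_space_PiM) (use assms(2) in auto)
  define J where "J = joint_law Xn T M"
  define R where "R = distr J T snd"
  define Y where "Y = (\<lambda>(x, \<phi>). \<phi> x - (\<integral>x'. \<phi> x' \<partial>Xn) :: real)"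
  have J: "prob_space J" and sets_J: "sets J = sets (Xn \<Otimes>\<^sub>M T)"
    unfolding J_def using Xn assms(6) by (simp_all add: prob_space_joint_law sets_joint_law)
  have R: "prob_space R" and sets_R: "sets (Xn \<Otimes>\<^sub>M R) = sets (Xn \<Otimes>\<^sub>M T)"
    unfolding R_def using sets_J
    by (auto intro!: prob_space.prob_space_distr[OF J] sets_pair_measure_cong)
  have marg: "distr J Xn fst = Xn"
    unfolding J_def using Xn assms(6) by (rule distr_joint_law_fst)
  note mutual_info =
    mutual_info_leD[OF J sets_J assms(7)[folded J_def], unfolded marg, folded R_def]
  have Y: "Y \<in> borel_measurable (Xn \<Otimes>\<^sub>M R)"
    unfolding Y_def measurable_cong_sets[OF sets_R refl]
    using measurable_centered_evaluation[OF prob_space_imp_sigma_finite[OF Xn] assms(4)] .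
  have "subgaussian Xn \<sigma> (\<lambda>x. Y (x, \<phi>))" if "\<phi> \<in> space R" for \<phi>
    using that assms(5) by (auto simp: R_def Y_def query_class_def)
  note bound = integral_square_le_KL_divergence[OF Xn R J sets_J[folded sets_R]
      mutual_info(1,2) Y this assms(3)]
  have "(\<integral>z. (Y z)\<^sup>2 \<partial>J) \<le> \<sigma>\<^sup>2 * (INF l\<in>{0<..<1::real}. (2 * B - ln (1 - l)) / l)"
  proof (rule le_mult_INF)
    fix l :: real assume "l \<in> {0<..<1}"
    then show "(\<integral>z. (Y z)\<^sup>2 \<partial>J) \<le> \<sigma>\<^sup>2 * ((2 * B - ln (1 - l)) / l)"
      using bound(2)[of l] mutual_info(3)
      by (auto elim!: order_trans intro!: mult_left_mono divide_right_mono)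
  qed (use assms(3) in auto)
  moreover have "(\<integral>\<^sup>+z. ennreal ((Y z)\<^sup>2) \<partial>J) = ennreal (\<integral>z. (Y z)\<^sup>2 \<partial>J)"
    using bound(1)[of "1/2"] by (intro nn_integral_eq_integral) auto
  ultimately show ?thesis
    unfolding J_def[symmetric] by (simp add: Y_def case_prod_beta' ennreal_leI)
qed

end
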